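(* Consider the setting and framework described in the context, with arbitrary learning rates $\alpha_k\in(0,1]$, $\alpha_1=1$, and arbitrary policy sequences. Then for all $k\ge 1$ and $h\in[H]$, $$\delta_h^k\le \sum_{t=1}^k\alpha_k^t\,\delta_{h+1}^t+\mathrm{reg}_{h+1}^k .$$ Suppose moreover that $\alpha_k=\frac{H+1}{H+k}$ for all $k\ge1$, and that $(\mathrm{reg}^k)_{k\ge1}$ is a sequence of nonnegative reals, non-increasing in $k$, with $\mathrm{reg}^k\ge \mathrm{reg}_h^k$ for all $h\in[H+1]$ and $k\ge 1$. Then for all $k\ge1$ and $h\in[H+1]$, $$\delta_h^k\le \frac{2H}{k}\sum_{t=1}^k \mathrm{reg}^t .$$
   Context: Setting. A finite-horizon two-player zero-sum Markov game with finite state set $\mathcal S$, finite action sets $\mathcal A$ (max-player, $A=|\mathcal A|$) and $\mathcal B$ (min-player, $B=|\mathcal B|$), horizon $H\ge 1$, reward functions $r_h:\mathcal S\times\mathcal A\times\mathcal B\to[0,1]$ and transition kernels $\mathbb P_h(\cdot\mid s,a,b)$ on $\mathcal S$, $h\in[H]$. For $f:\mathcal S\to\mathbb R$, $[\mathbb P_h f](s,a,b)=\sum_{s'}\mathbb P_h(s'\mid s,a,b)f(s')$. For $Q:\mathcal A\times\mathcal B\to\mathbb R$, $x\in\Delta_{\mathcal A}$, $y\in\Delta_{\mathcal B}$, write $\langle Q,x\times y\rangle=\sum_{a,b}x(a)y(b)Q(a,b)$. Optimal values: $Q^\star_{H+1}\equiv 0$, and for $h=H,\dots,1$, $V^\star_{h+1}(s)=\max_{x\in\Delta_{\mathcal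 A}}\min_{y\in\Delta_{\mathcal B}}\langle Q^\star_{h+1}(s,\cdot,\cdot),x\times y\rangle$ (with $V^\star_{H+1}\equiv0$) and $Q^\star_h=r_h+\mathbb P_hV^\star_{h+1}$. Framework. Given learning rates $\alpha_k\in(0,1]$ ($k\ge1$) with $\alpha_1=1$ and arbitrary Markov policies $\mu_h^k(\cdot\mid s)\in\Delta_{\mathcal A}$, $\nu_h^k(\cdot\mid s)\in\Delta_{\mathcal B}$ ($k\ge1$, $h\in[H]$, $s\in\mathcal S$), define $Q_{H+1}^k\equiv 0$ for all $k$, $Q_h^0\equiv H-h+1$, and for $k\ge1$, $h=H,\dots,1$: $$Q_h^k(s,a,b)=(1-\alpha_k)Q_h^{k-1}(s,a,b)+\alpha_k\Big(r_h(s,a,b)+\sum_{s'}\mathbb P_h(s'\mid s,a,b)\langle Q_{h+1}^k(s',\cdot,\cdot),\mu_{h+1}^k(\cdot\mid s')\times\nu_{h+1}^k(\cdot\mid s')\rangle\Big)$$ (for $h=H$ the inner product term is $0$). Let $\alpha_k^t=\alpha_t\prod_{j=t+1}^k(1-\alpha_j)$ for $1\le t\le k$. Weighted regrets: for $h\in[H]$, $\mathrm{reg}_{h,\mu}^k(s)=\max_{z\in\Delta_{\mathcal A}}\sum_{t=1}^k\alpha_k^t\langle Q_h^t(s,\cdot,\cdot),z\times\nu_h^t(\cdot|s)\rangle-\sum_{t=1}^k\alpha_k^t\langle Q_h^t(s,\cdot,\cdot),\mu_h^t(\cdot|s)\times\nu_h^t(\cdot|s)\rangle$, $\mathrm{reg}_{h,\nu}^k(s)=\sum_{t=1}^k\alpha_k^t\langle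 Q_h^t(s,\cdot,\cdot),\mu_h^t(\cdot|s)\times\nu_h^t(\cdot|s)\rangle-\min_{z\in\Delta_{\mathcal B}}\sum_{t=1}^k\alpha_k^t\langle Q_h^t(s,\cdot,\cdot),\mu_h^t(\cdot|s)\times z\rangle$, $\mathrm{reg}_h^k=\max_{s}\max\{\mathrm{reg}_{h,\mu}^k(s),\mathrm{reg}_{h,\nu}^k(s)\}$, and $\mathrm{reg}_{H+1}^k:=0$. Value estimation error: $\delta_h^k=\max_{s,a,b}|Q_h^k(s,a,b)-Q_h^\star(s,a,b)|$ (so $\delta_{H+1}^k=0$). *)

theory Defs
  imports Complex_Main
begin

definition simplex :: "('x::finite \<Rightarrow> real) set" where
  "simplex = {x. (\<forall>i. 0 \<le> x i) \<and> sum x UNIV = 1}"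

definition ip :: "('a::finite \<Rightarrow> 'b::finite \<Rightarrow> real) \<Rightarrow> ('a \<Rightarrow> real) \<Rightarrow> ('b \<Rightarrow> real) \<Rightarrow> real" where
  "ip Q x y = (\<Sum>a\<in>UNIV. \<Sum>b\<in>UNIV. x a * y b * Q a b)"

definition game_value :: "('a::finite \<Rightarrow> 'b::finite \<Rightarrow> real) \<Rightarrow> real" where
  "game_value Q = (SUP x\<in>simplex. INF y\<in>simplex. ip Q x y)"

text \<open>Optimal Q-values by backward induction; the first nat is the number of
  remaining steps.\<close>
primrec qs :: "(nat \<Rightarrow> 's::finite \<Rightarrow> 'a::finite \<Rightarrow> 'b::finite \<Rightarrow> real) \<Rightarrow>
    (nat \<Rightarrow> 's \<Rightarrow> 'a \<Rightarrow> 'b \<Rightarrow> 's \<Rightarrow> real) \<Rightarrow> nat \<Rightarrow> nat \<Rightarrow> 's \<Rightarrow> 'a \<Rightarrow> 'b \<Rightarrow> real" where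
  "qs r P 0 h = (\<lambda>s a b. 0)"
| "qs r P (Suc n) h = (\<lambda>s a b. r h s a b +
      (\<Sum>s'\<in>UNIV. P h s a b s' * game_value (qs r P n (Suc h) s')))"

definition Qstar :: "nat \<Rightarrow> (nat \<Rightarrow> 's::finite \<Rightarrow> 'a::finite \<Rightarrow> 'b::finite \<Rightarrow> real) \<Rightarrow>
    (nat \<Rightarrow> 's \<Rightarrow> 'a \<Rightarrow> 'b \<Rightarrow> 's \<Rightarrow> real) \<Rightarrow> nat \<Rightarrow> 's \<Rightarrow> 'a \<Rightarrow> 'b \<Rightarrow> real" where
  "Qstar H r P h = qs r P (H + 1 - h) h"

definition wt :: "(nat \<Rightarrow> real) \<Rightarrow> nat \<Rightarrow> nat \<Rightarrow> real" where
  "wt alpha k t = alpha t * (\<Prod>j\<in>{t+1..k}. (1 - alpha j))"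

definition reg_mu :: "(nat \<Rightarrow> real) \<Rightarrow> (nat \<Rightarrow> nat \<Rightarrow> 's \<Rightarrow> 'a::finite \<Rightarrow> 'b::finite \<Rightarrow> real) \<Rightarrow>
    (nat \<Rightarrow> nat \<Rightarrow> 's \<Rightarrow> 'a \<Rightarrow> real) \<Rightarrow> (nat \<Rightarrow> nat \<Rightarrow> 's \<Rightarrow> 'b \<Rightarrow> real) \<Rightarrow>
    nat \<Rightarrow> nat \<Rightarrow> 's \<Rightarrow> real" where
  "reg_mu alpha Q mu nu k h s =
     (SUP z\<in>simplex. \<Sum>t=1..k. wt alpha k t * ip (Q t h s) z (nu t h s))
     - (\<Sum>t=1..k. wt alpha k t * ip (Q t h s) (mu t h s) (nu t h s))"

definition reg_nu :: "(nat \<Rightarrow> real) \<Rightarrow> (nat \<Rightarrow> nat \<Rightarrow> 's \<Rightarrow> 'a::finite \<Rightarrow> 'b::finite \<Rightarrow> real) \<Rightarrow>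
    (nat \<Rightarrow> nat \<Rightarrow> 's \<Rightarrow> 'a \<Rightarrow> real) \<Rightarrow> (nat \<Rightarrow> nat \<Rightarrow> 's \<Rightarrow> 'b \<Rightarrow> real) \<Rightarrow>
    nat \<Rightarrow> nat \<Rightarrow> 's \<Rightarrow> real" where
  "reg_nu alpha Q mu nu k h s =
     (\<Sum>t=1..k. wt alpha k t * ip (Q t h s) (mu t h s) (nu t h s))
     - (INF z\<in>simplex. \<Sum>t=1..k. wt alpha k t * ip (Q t h s) (mu t h s) z)"

definition reg :: "nat \<Rightarrow> (nat \<Rightarrow> real) \<Rightarrow> (nat \<Rightarrow> nat \<Rightarrow> 's::finite \<Rightarrow> 'a::finite \<Rightarrow> 'b::finite \<Rightarrow> real) \<Rightarrow>
    (nat \<Rightarrow> nat \<Rightarrow> 's \<Rightarrow> 'a \<Rightarrow> real) \<Rightarrow> (nat \<Rightarrow> nat \<Rightarrow> 's \<Rightarrow> 'b \<Rightarrow> real) \<Rightarrow>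
    nat \<Rightarrow> nat \<Rightarrow> real" where
  "reg H alpha Q mu nu k h =
     (if 1 \<le> h \<and> h \<le> H
      then Max (range (\<lambda>s. max (reg_mu alpha Q mu nu k h s) (reg_nu alpha Q mu nu k h s)))
      else 0)"

definition delta :: "nat \<Rightarrow> (nat \<Rightarrow> 's::finite \<Rightarrow> 'a::finite \<Rightarrow> 'b::finite \<Rightarrow> real) \<Rightarrow>
    (nat \<Rightarrow> 's \<Rightarrow> 'a \<Rightarrow> 'b \<Rightarrow> 's \<Rightarrow> real) \<Rightarrow> (nat \<Rightarrow> nat \<Rightarrow> 's \<Rightarrow> 'a \<Rightarrow> 'b \<Rightarrow> real) \<Rightarrow>
    nat \<Rightarrow> nat \<Rightarrow> real" where
  "delta H r P Q k h =
     Max (range (\<lambda>(s, a, b). \<bar>Q k h s a b - Qstar H r P h s a b\<bar>))"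

end

theory Submission imports Defs begin

text \<open>
  Since \<open>alpha 1 = 1\<close>, the iterate \<open>Q k h\<close> is exactly the \<open>wt alpha k\<close>-weighted average of
  the targets \<open>r h + P h <Q t (h+1), mu t (h+1) x nu t (h+1)>\<close>, \<open>t = 1..k\<close>, and \<open>Q* h\<close> is
  the same expression with the game value of \<open>Q* (h+1)\<close>. At each next state, replacing
  \<open>Q t (h+1)\<close> by \<open>Q* (h+1)\<close> costs the averaged error, and the averaged strategies
  \<open>\<Sum>t. wt alpha k t * mu t\<close> and \<open>\<Sum>t. wt alpha k t * nu t\<close> are feasible in the max-min,
  so what remains of the gap is one of the two weighted regrets.

  For \<open>alpha k = (H+1)/(H+k)\<close>, the weighted average of \<open>S t / t\<close>, where \<open>S\<close> is the
  running sum of the regret bounds, is at most \<open>(1 + 1/H) S k / k\<close>, and the current regret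
  bound is at most \<open>S k / k\<close> by monotonicity. Unrolling the recursion from \<open>h = H+1\<close>
  downwards gives \<open>delta k h \<le> H ((1 + 1/H)^(H+1-h) - 1) S k / k \<le> 2 H S k / k\<close>,
  as \<open>(1 + 1/H)^H \<le> e < 3\<close>.
\<close>

lemma simplex_nonempty: "(simplex :: ('x::finite \<Rightarrow> real) set) \<noteq> {}"
proof -
  have "(\<lambda>_. 1 / real (card (UNIV :: 'x set))) \<in> (simplex :: ('x \<Rightarrow> real) set)"
    unfolding simplex_def by auto
  then show ?thesis by blast
qed

lemma convex_combination_in_simplex:
  assumes "finite T" "\<And>t. t \<in> T \<Longrightarrow> 0 \<le> w t" "sum w T = 1"
    and "\<And>t. t \<in> T \<Longrightarrow> x t \<in> simplex"
  shows "(\<lambda>a. \<Sum>t\<in>T. w t * x t a) \<in> simplex"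
proof -
  have "(\<Sum>a\<in>UNIV. \<Sum>t\<in>T. w t * x t a) = (\<Sum>t\<in>T. w t * sum (x t) UNIV)"
    by (simp add: sum.swap[of _ T] sum_distrib_left)
  also have "\<dots> = 1" using assms(3,4) by (simp add: simplex_def)
  finally show ?thesis
    using assms unfolding simplex_def by (auto intro!: sum_nonneg)
qed

lemma abs_ip_le:
  assumes x: "x \<in> simplex" and y: "y \<in> simplex" and M: "\<And>a b. \<bar>Q a b\<bar> \<le> M"
  shows "\<bar>ip Q x y\<bar> \<le> M"
proof -
  have x0: "\<And>a. 0 \<le> x a" and x1: "sum x UNIV = 1" using x by (auto simp: simplex_def)
  have y0: "\<And>b. 0 \<le> y b" and y1: "sum y UNIV = 1" using y by (auto simp: simplex_def)
  have "\<bar>ip Q x y\<bar> \<le> (\<Sum>a\<in>UNIV. \<Sum>b\<in>UNIV. \<bar>x a * y b * Q a b\<bar>)"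
    unfolding ip_def by (rule order.trans[OF sum_abs sum_mono]) (rule sum_abs)
  also have "\<dots> \<le> (\<Sum>a\<in>UNIV. \<Sum>b\<in>UNIV. x a * y b * M)"
    by (intro sum_mono) (simp add: abs_mult x0 y0 M mult_left_mono)
  also have "\<dots> = M"
    by (simp add: sum_distrib_left[symmetric] sum_distrib_right[symmetric] x1 y1 mult.assoc)
  finally show ?thesis .
qed

lemma abs_ip_le_sum_abs:
  assumes "x \<in> simplex" "y \<in> simplex"
  shows "\<bar>ip Q x y\<bar> \<le> (\<Sum>a\<in>UNIV. \<Sum>b\<in>UNIV. \<bar>Q a b\<bar>)"
proof (rule abs_ip_le[OF assms])
  fix a b
  have "\<bar>Q a b\<bar> \<le> (\<Sum>b\<in>UNIV. \<bar>Q a b\<bar>)" by (rule member_le_sum) auto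
  also have "\<dots> \<le> (\<Sum>a\<in>UNIV. \<Sum>b\<in>UNIV. \<bar>Q a b\<bar>)" by (rule member_le_sum) (auto intro: sum_nonneg)
  finally show "\<bar>Q a b\<bar> \<le> (\<Sum>a\<in>UNIV. \<Sum>b\<in>UNIV. \<bar>Q a b\<bar>)" .
qed

lemma abs_ip_diff_le:
  assumes "x \<in> simplex" "y \<in> simplex" "\<And>a b. \<bar>Q1 a b - Q2 a b\<bar> \<le> M"
  shows "\<bar>ip Q1 x y - ip Q2 x y\<bar> \<le> M"
proof -
  have "ip Q1 x y - ip Q2 x y = ip (\<lambda>a b. Q1 a b - Q2 a b) x y"
    unfolding ip_def by (simp add: sum_subtractf[symmetric] algebra_simps)
  then show ?thesis using abs_ip_le[OF assms] by simp
qed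

lemma sum_ip_left: "(\<Sum>t\<in>T. w t * ip Q (x t) y) = ip Q (\<lambda>a. \<Sum>t\<in>T. w t * x t a) y"
  unfolding ip_def
  by (simp add: sum_distrib_left sum_distrib_right mult.assoc mult.left_commute sum.swap[of _ T])

lemma sum_ip_right: "(\<Sum>t\<in>T. w t * ip Q x (y t)) = ip Q x (\<lambda>b. \<Sum>t\<in>T. w t * y t b)"
  unfolding ip_def
  by (simp add: sum_distrib_left sum_distrib_right mult.assoc mult.left_commute sum.swap[of _ T])

lemma game_value_zero: "game_value (\<lambda>(a::'a::finite) (b::'b::finite). 0) = 0"
  using simplex_nonempty[where 'x='a] simplex_nonempty[where 'x='b]
  by (simp add: game_value_def ip_def)

lemma abs_weighted_sum_le:
  fixes w f B :: "'t \<Rightarrow> real"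
  assumes "\<And>t. t \<in> T \<Longrightarrow> 0 \<le> w t" "\<And>t. t \<in> T \<Longrightarrow> \<bar>f t\<bar> \<le> B t"
  shows "\<bar>\<Sum>t\<in>T. w t * f t\<bar> \<le> (\<Sum>t\<in>T. w t * B t)"
proof -
  have "\<bar>\<Sum>t\<in>T. w t * f t\<bar> \<le> (\<Sum>t\<in>T. \<bar>w t * f t\<bar>)" by (rule sum_abs)
  also have "\<dots> \<le> (\<Sum>t\<in>T. w t * B t)"
    by (rule sum_mono) (simp add: abs_mult assms mult_left_mono)
  finally show ?thesis .
qed

lemma bdd_below_ip_simplex:
  "x \<in> simplex \<Longrightarrow> bdd_below ((\<lambda>y. ip Q x y) ` simplex)"
  using abs_ip_le_sum_abs[of x _ Q]
  by (intro bdd_belowI[where m="- (\<Sum>a\<in>UNIV. \<Sum>b\<in>UNIV. \<bar>Q a b\<bar>)"]) force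

lemma bdd_above_maxmin:
  "bdd_above ((\<lambda>x. INF y\<in>simplex. ip (Q :: 'a::finite \<Rightarrow> 'b::finite \<Rightarrow> real) x y) ` simplex)"
proof (rule bdd_aboveI[where M="\<Sum>a\<in>UNIV. \<Sum>b\<in>UNIV. \<bar>Q a b\<bar>"], clarsimp)
  fix x :: "'a \<Rightarrow> real" assume x: "x \<in> simplex"
  obtain y :: "'b \<Rightarrow> real" where y: "y \<in> simplex" using simplex_nonempty by blast
  have "(INF y\<in>simplex. ip Q x y) \<le> ip Q x y" by (rule cINF_lower[OF bdd_below_ip_simplex[OF x] y])
  also have "\<dots> \<le> (\<Sum>a\<in>UNIV. \<Sum>b\<in>UNIV. \<bar>Q a b\<bar>)" using abs_ip_le_sum_abs[OF x y, of Q] by simp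
  finally show "(INF y\<in>simplex. ip Q x y) \<le> (\<Sum>a\<in>UNIV. \<Sum>b\<in>UNIV. \<bar>Q a b\<bar>)" .
qed

text \<open>The averaged max-strategy is feasible in the max-min defining the game value.\<close>

lemma INF_weighted_play_le_game_value:
  fixes Qt :: "'t \<Rightarrow> 'a::finite \<Rightarrow> 'b::finite \<Rightarrow> real"
  assumes T: "finite T" and w0: "\<And>t. t \<in> T \<Longrightarrow> 0 \<le> w t" and w1: "sum w T = 1"
    and x: "\<And>t. t \<in> T \<Longrightarrow> x t \<in> simplex"
    and close: "\<And>t a b. t \<in> T \<Longrightarrow> \<bar>Qt t a b - Q a b\<bar> \<le> d t"
  shows "(INF z\<in>simplex. \<Sum>t\<in>T. w t * ip (Qt t) (x t) z) \<le> game_value Q + (\<Sum>t\<in>T. w t * d t)"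
proof -
  define F where "F z = (\<Sum>t\<in>T. w t * ip (Qt t) (x t) z)" for z
  define xbar where "xbar = (\<lambda>a. \<Sum>t\<in>T. w t * x t a)"
  have xbar: "xbar \<in> simplex"
    unfolding xbar_def by (rule convex_combination_in_simplex[OF T w0 w1 x])
  have bdd: "bdd_below (F ` simplex)"
  proof (rule bdd_belowI[where m="- (\<Sum>t\<in>T. w t * (\<Sum>a\<in>UNIV. \<Sum>b\<in>UNIV. \<bar>Qt t a b\<bar>))"], clarify)
    fix z :: "'b \<Rightarrow> real" assume "z \<in> simplex"
    then have "\<bar>F z\<bar> \<le> (\<Sum>t\<in>T. w t * (\<Sum>a\<in>UNIV. \<Sum>b\<in>UNIV. \<bar>Qt t a b\<bar>))"
      unfolding F_def by (intro abs_weighted_sum_le w0 abs_ip_le_sum_abs x)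
    then show "- (\<Sum>t\<in>T. w t * (\<Sum>a\<in>UNIV. \<Sum>b\<in>UNIV. \<bar>Qt t a b\<bar>)) \<le> F z" by linarith
  qed
  have "(INF z\<in>simplex. F z) - (\<Sum>t\<in>T. w t * d t) \<le> (INF z\<in>simplex. ip Q xbar z)"
  proof (rule cINF_greatest[OF simplex_nonempty])
    fix z :: "'b \<Rightarrow> real" assume z: "z \<in> simplex"
    have "(INF z\<in>simplex. F z) \<le> F z" by (rule cINF_lower[OF bdd z])
    also have "\<dots> \<le> (\<Sum>t\<in>T. w t * (ip Q (x t) z + d t))"
    proof (unfold F_def, intro sum_mono mult_left_mono w0)
      fix t assume t: "t \<in> T"
      show "ip (Qt t) (x t) z \<le> ip Q (x t) z + d t"
        using abs_ip_diff_le[of "x t" z "Qt t" Q "d t", OF x[OF t] z close[OF t]] by linarith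
    qed
    also have "\<dots> = ip Q xbar z + (\<Sum>t\<in>T. w t * d t)"
      by (simp add: distrib_left sum.distrib xbar_def sum_ip_left)
    finally show "(INF z\<in>simplex. F z) - (\<Sum>t\<in>T. w t * d t) \<le> ip Q xbar z" by simp
  qed
  also have "(INF z\<in>simplex. ip Q xbar z) \<le> game_value Q"
    unfolding game_value_def by (rule cSUP_upper[OF xbar bdd_above_maxmin])
  finally show ?thesis by (simp add: F_def algebra_simps)
qed

text \<open>Dually, the averaged min-strategy bounds every inner infimum of the game value.\<close>

lemma game_value_le_SUP_weighted_play:
  fixes Qt :: "'t \<Rightarrow> 'a::finite \<Rightarrow> 'b::finite \<Rightarrow> real"
  assumes T: "finite T" and w0: "\<And>t. t \<in> T \<Longrightarrow> 0 \<le> w t" and w1: "sum w T = 1"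
    and y: "\<And>t. t \<in> T \<Longrightarrow> y t \<in> simplex"
    and close: "\<And>t a b. t \<in> T \<Longrightarrow> \<bar>Qt t a b - Q a b\<bar> \<le> d t"
  shows "game_value Q \<le> (SUP z\<in>simplex. \<Sum>t\<in>T. w t * ip (Qt t) z (y t)) + (\<Sum>t\<in>T. w t * d t)"
  unfolding game_value_def
proof (rule cSUP_least[OF simplex_nonempty])
  define F where "F z = (\<Sum>t\<in>T. w t * ip (Qt t) z (y t))" for z
  define ybar where "ybar = (\<lambda>b. \<Sum>t\<in>T. w t * y t b)"
  have ybar: "ybar \<in> simplex"
    unfolding ybar_def by (rule convex_combination_in_simplex[OF T w0 w1 y])
  have bdd: "bdd_above (F ` simplex)"
  proof (rule bdd_aboveI[where M="\<Sum>t\<in>T. w t * (\<Sum>a\<in>UNIV. \<Sum>b\<in>UNIV. \<bar>Qt t a b\<bar>)"], clarify)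
    fix z :: "'a \<Rightarrow> real" assume "z \<in> simplex"
    then have "\<bar>F z\<bar> \<le> (\<Sum>t\<in>T. w t * (\<Sum>a\<in>UNIV. \<Sum>b\<in>UNIV. \<bar>Qt t a b\<bar>))"
      unfolding F_def by (intro abs_weighted_sum_le w0 abs_ip_le_sum_abs y)
    then show "F z \<le> (\<Sum>t\<in>T. w t * (\<Sum>a\<in>UNIV. \<Sum>b\<in>UNIV. \<bar>Qt t a b\<bar>))" by linarith
  qed
  fix x :: "'a \<Rightarrow> real" assume x: "x \<in> simplex"
  have "(INF z\<in>simplex. ip Q x z) \<le> ip Q x ybar" by (rule cINF_lower[OF bdd_below_ip_simplex[OF x] ybar])
  also have "\<dots> = (\<Sum>t\<in>T. w t * ip Q x (y t))" by (simp add: ybar_def sum_ip_right)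
  also have "\<dots> \<le> (\<Sum>t\<in>T. w t * (ip (Qt t) x (y t) + d t))"
  proof (intro sum_mono mult_left_mono w0)
    fix t assume t: "t \<in> T"
    show "ip Q x (y t) \<le> ip (Qt t) x (y t) + d t"
      using abs_ip_diff_le[of x "y t" "Qt t" Q "d t", OF x y[OF t] close[OF t]] by linarith
  qed
  also have "\<dots> = F x + (\<Sum>t\<in>T. w t * d t)" by (simp add: distrib_left sum.distrib F_def)
  also have "\<dots> \<le> (SUP z\<in>simplex. F z) + (\<Sum>t\<in>T. w t * d t)" using cSUP_upper[OF x bdd] by simp
  finally show "(INF z\<in>simplex. ip Q x z) \<le> (SUP z\<in>simplex. \<Sum>t\<in>T. w t * ip (Qt t) z (y t)) + (\<Sum>t\<in>T. w t * d t)"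
    by (simp add: F_def)
qed

lemma wt_last: "wt alpha k k = alpha k"
  unfolding wt_def by simp

lemma wt_Suc: "t \<le> k \<Longrightarrow> wt alpha (Suc k) t = (1 - alpha (Suc k)) * wt alpha k t"
  unfolding wt_def by (simp add: prod.nat_ivl_Suc' mult_ac)

lemma weighted_sum_wt_Suc:
  "(\<Sum>t=1..Suc k. wt alpha (Suc k) t * f t)
     = (1 - alpha (Suc k)) * (\<Sum>t=1..k. wt alpha k t * f t) + alpha (Suc k) * f (Suc k)"
proof -
  have "(\<Sum>t=1..k. wt alpha (Suc k) t * f t) = (1 - alpha (Suc k)) * (\<Sum>t=1..k. wt alpha k t * f t)"
    by (simp add: sum_distrib_left wt_Suc mult.assoc)
  then show ?thesis by (simp add: wt_last)
qed

lemma wt_nonneg: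
  assumes "\<And>k. 1 \<le> k \<Longrightarrow> 0 < alpha k \<and> alpha k \<le> 1" "1 \<le> t"
  shows "0 \<le> wt alpha k t"
  unfolding wt_def using assms by (auto intro!: prod_nonneg mult_nonneg_nonneg simp: less_imp_le)

text \<open>The initial value \<open>x 0\<close> drops out because \<open>alpha 1 = 1\<close>.\<close>

lemma learning_rate_recursion_eq_weighted_sum:
  assumes alpha1: "alpha 1 = 1"
    and step: "\<And>k. 1 \<le> k \<Longrightarrow> x k = (1 - alpha k) * x (k - 1) + alpha k * y k"
    and k: "1 \<le> k"
  shows "x k = (\<Sum>t=1..k. wt alpha k t * y t)"
  using k
proof (induction k rule: nat_induct_at_least)
  case base
  then show ?case using step[of 1] alpha1 by (simp add: wt_last)
next
  case (Suc k)
  then show ?case using step[of "Suc k"] weighted_sum_wt_Suc[of alpha k y] by simp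
qed

lemma sum_wt_eq_1:
  assumes "alpha 1 = 1" "1 \<le> k"
  shows "(\<Sum>t=1..k. wt alpha k t) = 1"
  using learning_rate_recursion_eq_weighted_sum[where x="\<lambda>_. 1" and y="\<lambda>_. 1"] assms by simp

lemma Qstar_last: "Qstar H r P (H + 1) = (\<lambda>s a b. 0)"
  unfolding Qstar_def by simp

lemma Qstar_step:
  assumes "h \<le> H"
  shows "Qstar H r P h s a b = r h s a b + (\<Sum>s'\<in>UNIV. P h s a b s' * game_value (Qstar H r P (h + 1) s'))"
proof -
  from assms have "H + 1 - h = Suc (H + 1 - (h + 1))" by simp
  then show ?thesis unfolding Qstar_def by simp
qed

lemma abs_diff_Qstar_le_delta: "\<bar>Q k h s a b - Qstar H r P h s a b\<bar> \<le> delta H r P Q k h"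
  unfolding delta_def by (rule Max_ge) (auto intro!: image_eqI[where x="(s, a, b)"])

lemma delta_le:
  "(\<And>s a b. \<bar>Q k h s a b - Qstar H r P h s a b\<bar> \<le> M) \<Longrightarrow> delta H r P Q k h \<le> M"
  unfolding delta_def by (subst Max_le_iff) auto

lemma delta_nonneg: "0 \<le> delta H r P Q k h"
  using abs_diff_Qstar_le_delta[of Q k h] by (meson abs_ge_zero order.trans)

lemma reg_mu_le_reg: "1 \<le> h \<Longrightarrow> h \<le> H \<Longrightarrow> reg_mu alpha Q mu nu k h s \<le> reg H alpha Q mu nu k h"
  and reg_nu_le_reg: "1 \<le> h \<Longrightarrow> h \<le> H \<Longrightarrow> reg_nu alpha Q mu nu k h s \<le> reg H alpha Q mu nu k h"
  unfolding reg_def by (auto simp: Max_ge_iff intro!: exI[of _ s])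

lemma weighted_average_le:
  fixes H :: nat and S :: "nat \<Rightarrow> real"
  assumes H: "1 \<le> H" and alpha: "\<And>k. 1 \<le> k \<Longrightarrow> alpha k = (real H + 1) / (real H + real k)"
    and S0: "\<And>k. 0 \<le> S k" and S_mono: "\<And>k. S k \<le> S (Suc k)" and n: "1 \<le> n"
  shows "(\<Sum>t=1..n. wt alpha n t * (S t / real t)) \<le> (real H + 1) / real H * S n / real n"
  using n
proof (induction n rule: nat_induct_at_least)
  case base
  then show ?case using H S0[of 1] alpha[of 1] by (simp add: wt_last field_simps)
next
  case (Suc n)
  define q where "q = (real H + 1) / real H"
  have Hpos: "0 < real H" and npos: "0 < real n" using H Suc.hyps by auto
  have q0: "0 \<le> q" unfolding q_def by simp
  have alpha_Suc: "alpha (Suc n) = (real H + 1) / (real H + real n + 1)"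
    using alpha[of "Suc n"] by (simp add: add.assoc)
  have IH': "(\<Sum>t=1..n. wt alpha n t * (S t / real t)) \<le> q * S (Suc n) / real n"
    using Suc.IH mult_left_mono[OF S_mono q0] npos unfolding q_def[symmetric]
    by (meson divide_right_mono less_imp_le order.trans)
  have one_minus_alpha: "1 - alpha (Suc n) = real n / (real H + real n + 1)"
    unfolding alpha_Suc using Hpos npos by (simp add: field_simps)
  have "(\<Sum>t=1..Suc n. wt alpha (Suc n) t * (S t / real t))
      = (1 - alpha (Suc n)) * (\<Sum>t=1..n. wt alpha n t * (S t / real t))
        + alpha (Suc n) * (S (Suc n) / real (Suc n))"
    by (rule weighted_sum_wt_Suc)
  also have "\<dots> \<le> (1 - alpha (Suc n)) * (q * S (Suc n) / real n) + alpha (Suc n) * (S (Suc n) / real (Suc n))"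
    using IH' one_minus_alpha by (intro add_right_mono mult_left_mono) simp_all
  also have "\<dots> = q * S (Suc n) / real (Suc n)"
  proof -
    define D where "D = real H + real n + 1"
    define E where "E = real (Suc n)"
    have D: "0 < D" and E: "0 < E" using Hpos npos by (simp_all add: D_def E_def)
    have "real n / D * (q * S (Suc n) / real n) + (real H + 1) / D * (S (Suc n) / E)
        = (real H + 1) * S (Suc n) * (E + real H) / (real H * D * E)"
      unfolding q_def using Hpos npos D E by (simp add: field_simps)
    also have "E + real H = D" by (simp add: D_def E_def)
    finally show ?thesis
      using D npos unfolding one_minus_alpha unfolding alpha_Suc D_def[symmetric] E_def[symmetric] q_def
      by simp
  qed
  finally show ?case by (simp add: q_def)
qed

lemma ratio_power_le_three:
  fixes H :: nat
  assumes "1 \<le> H" "m \<le> H"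
  shows "((real H + 1) / real H) ^ m \<le> 3"
proof -
  have Hpos: "0 < real H" using assms by simp
  have "((real H + 1) / real H) ^ m \<le> (1 + 1 / real H) ^ H"
    using power_increasing[OF assms(2), of "1 + 1 / real H"] Hpos by (simp add: field_simps)
  also have "\<dots> \<le> exp (1 / real H) ^ H"
    by (rule power_mono) (use Hpos in auto)
  also have "\<dots> = exp 1" using Hpos by (simp add: exp_of_nat_mult[symmetric])
  also have "\<dots> \<le> 3" by (rule exp_le)
  finally show ?thesis .
qed

lemma antitone_le_average:
  fixes R :: "nat \<Rightarrow> real"
  assumes R_mono: "\<And>k. 1 \<le> k \<Longrightarrow> R (k + 1) \<le> R k" and n: "1 \<le> n"
  shows "R n \<le> (\<Sum>t=1..n. R t) / real n"
proof -
  have "R n \<le> R t" if t: "t \<in> {1..n}" for t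
  proof -
    from t have "t \<le> n" by simp
    then show ?thesis
    proof (induction n rule: dec_induct)
      case (step m)
      then show ?case using R_mono[of m] t by simp
    qed simp
  qed
  then have "real n * R n \<le> (\<Sum>t=1..n. R t)"
    using sum_mono[of "{1..n}" "\<lambda>_. R n" R] by simp
  then show ?thesis using n by (simp add: field_simps)
qed

locale zero_sum_q_learning =
  fixes H :: nat
    and r :: "nat \<Rightarrow> 's::finite \<Rightarrow> 'a::finite \<Rightarrow> 'b::finite \<Rightarrow> real"
    and P :: "nat \<Rightarrow> 's \<Rightarrow> 'a \<Rightarrow> 'b \<Rightarrow> 's \<Rightarrow> real"
    and alpha :: "nat \<Rightarrow> real"
    and mu :: "nat \<Rightarrow> nat \<Rightarrow> 's \<Rightarrow> 'a \<Rightarrow> real"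
    and nu :: "nat \<Rightarrow> nat \<Rightarrow> 's \<Rightarrow> 'b \<Rightarrow> real"
    and Q :: "nat \<Rightarrow> nat \<Rightarrow> 's \<Rightarrow> 'a \<Rightarrow> 'b \<Rightarrow> real"
  assumes P_dist: "\<And>h s a b. 1 \<le> h \<Longrightarrow> h \<le> H \<Longrightarrow> P h s a b \<in> simplex"
    and alpha_range: "\<And>k. 1 \<le> k \<Longrightarrow> 0 < alpha k \<and> alpha k \<le> 1"
    and alpha1: "alpha 1 = 1"
    and mu_pol: "\<And>k h s. 1 \<le> k \<Longrightarrow> 1 \<le> h \<Longrightarrow> h \<le> H \<Longrightarrow> mu k h s \<in> simplex"
    and nu_pol: "\<And>k h s. 1 \<le> k \<Longrightarrow> 1 \<le> h \<Longrightarrow> h \<le> H \<Longrightarrow> nu k h s \<in> simplex"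
    and Q_last: "\<And>k s a b. Q k (H + 1) s a b = 0"
    and Q_step: "\<And>k h s a b. 1 \<le> k \<Longrightarrow> 1 \<le> h \<Longrightarrow> h \<le> H \<Longrightarrow>
        Q k h s a b = (1 - alpha k) * Q (k - 1) h s a b
          + alpha k * (r h s a b
              + (\<Sum>s'\<in>UNIV. P h s a b s' * ip (Q k (h + 1) s') (mu k (h + 1) s') (nu k (h + 1) s')))"
begin

lemma Q_eq_weighted_target:
  assumes k: "1 \<le> k" and h: "1 \<le> h" "h \<le> H"
  shows "Q k h s a b = r h s a b
    + (\<Sum>s'\<in>UNIV. P h s a b s' * (\<Sum>t=1..k. wt alpha k t * ip (Q t (h + 1) s') (mu t (h + 1) s') (nu t (h + 1) s')))"
proof -
  define V where "V t s' = ip (Q t (h + 1) s') (mu t (h + 1) s') (nu t (h + 1) s')" for t s'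
  have "Q k h s a b = (\<Sum>t=1..k. wt alpha k t * (r h s a b + (\<Sum>s'\<in>UNIV. P h s a b s' * V t s')))"
    using Q_step h
    by (intro learning_rate_recursion_eq_weighted_sum[where x="\<lambda>k. Q k h s a b" and alpha=alpha, OF alpha1 _ k])
      (simp add: V_def)
  also have "\<dots> = (\<Sum>t=1..k. wt alpha k t) * r h s a b + (\<Sum>s'\<in>UNIV. P h s a b s' * (\<Sum>t=1..k. wt alpha k t * V t s'))"
    by (simp add: distrib_left sum.distrib sum_distrib_left sum_distrib_right mult_ac) (rule sum.swap)
  finally show ?thesis using sum_wt_eq_1[of alpha, OF alpha1 k] by (simp add: V_def)
qed

lemma averaged_next_value_error:
  assumes k: "1 \<le> k" and h: "1 \<le> h" "h \<le> H"
  shows "\<bar>(\<Sum>t=1..k. wt alpha k t * ip (Q t (h + 1) s') (mu t (h + 1) s') (nu t (h + 1) s'))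
           - game_value (Qstar H r P (h + 1) s')\<bar>
         \<le> (\<Sum>t=1..k. wt alpha k t * delta H r P Q t (h + 1)) + reg H alpha Q mu nu k (h + 1)"
    (is "\<bar>?W - ?G\<bar> \<le> ?D + ?R")
proof (cases "h = H")
  case True
  have "0 \<le> ?D"
    using wt_nonneg[OF alpha_range] delta_nonneg by (auto intro!: sum_nonneg mult_nonneg_nonneg)
  moreover have "?G = 0"
    using True Qstar_last[of H r P] by (simp add: game_value_zero)
  ultimately show ?thesis
    using True Q_last by (simp add: ip_def reg_def)
next
  case False
  with h have g: "1 \<le> h + 1" "h + 1 \<le> H" by auto
  have w0: "\<And>t. t \<in> {1..k} \<Longrightarrow> 0 \<le> wt alpha k t" using wt_nonneg[OF alpha_range] by auto
  note weights = finite_atLeastAtMost w0 sum_wt_eq_1[of alpha, OF alpha1 k]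
  have mu': "\<And>t. t \<in> {1..k} \<Longrightarrow> mu t (h + 1) s' \<in> simplex"
    and nu': "\<And>t. t \<in> {1..k} \<Longrightarrow> nu t (h + 1) s' \<in> simplex"
    using mu_pol nu_pol g by auto
  have "?W - ?G \<le> ?D + ?R"
    using INF_weighted_play_le_game_value[where Qt="\<lambda>t. Q t (h + 1) s'" and Q="Qstar H r P (h + 1) s'"
        and d="\<lambda>t. delta H r P Q t (h + 1)" and x="\<lambda>t. mu t (h + 1) s'", OF weights mu' abs_diff_Qstar_le_delta]
      reg_nu_le_reg[OF g, of alpha Q mu nu k s']
    unfolding reg_nu_def by linarith
  moreover have "?G - ?W \<le> ?D + ?R"
    using game_value_le_SUP_weighted_play[where Qt="\<lambda>t. Q t (h + 1) s'" and Q="Qstar H r P (h + 1) s'"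
        and d="\<lambda>t. delta H r P Q t (h + 1)" and y="\<lambda>t. nu t (h + 1) s'", OF weights nu' abs_diff_Qstar_le_delta]
      reg_mu_le_reg[OF g, of alpha Q mu nu k s']
    unfolding reg_mu_def by linarith
  ultimately show ?thesis by linarith
qed

lemma delta_step:
  assumes k: "1 \<le> k" and h: "1 \<le> h" "h \<le> H"
  shows "delta H r P Q k h \<le> (\<Sum>t=1..k. wt alpha k t * delta H r P Q t (h + 1)) + reg H alpha Q mu nu k (h + 1)"
proof (rule delta_le)
  fix s a b
  define W where "W s' = (\<Sum>t=1..k. wt alpha k t * ip (Q t (h + 1) s') (mu t (h + 1) s') (nu t (h + 1) s'))" for s'
  define G where "G s' = game_value (Qstar H r P (h + 1) s')" for s'
  define E where "E = (\<Sum>t=1..k. wt alpha k t * delta H r P Q t (h + 1)) + reg H alpha Q mu nu k (h + 1)"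
  have P0: "\<And>s'. 0 \<le> P h s a b s'" and P1: "sum (P h s a b) UNIV = 1"
    using P_dist[OF h] by (auto simp: simplex_def)
  have "Q k h s a b - Qstar H r P h s a b = (\<Sum>s'\<in>UNIV. P h s a b s' * (W s' - G s'))"
    using Q_eq_weighted_target[OF k h] Qstar_step[OF h(2), of r P s a b]
    by (simp add: W_def G_def sum_subtractf right_diff_distrib)
  also have "\<bar>\<dots>\<bar> \<le> (\<Sum>s'\<in>UNIV. P h s a b s' * E)"
    using averaged_next_value_error[OF k h] by (intro abs_weighted_sum_le P0) (simp add: W_def G_def E_def)
  also have "\<dots> = E" by (simp add: sum_distrib_right[symmetric] P1)
  finally show "\<bar>Q k h s a b - Qstar H r P h s a b\<bar> \<le> E" .
qed

context
  fixes R :: "nat \<Rightarrow> real"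
  assumes H: "1 \<le> H"
    and alpha_eq: "\<And>k. 1 \<le> k \<Longrightarrow> alpha k = (real H + 1) / (real H + real k)"
    and R0: "\<And>k. 1 \<le> k \<Longrightarrow> 0 \<le> R k"
    and R_mono: "\<And>k. 1 \<le> k \<Longrightarrow> R (k + 1) \<le> R k"
    and reg_le: "\<And>k h. 1 \<le> k \<Longrightarrow> 1 \<le> h \<Longrightarrow> h \<le> H + 1 \<Longrightarrow> reg H alpha Q mu nu k h \<le> R k"
begin

text \<open>The constant reproduces itself under the one-step recursion because, with
  \<open>q = (H+1)/H\<close>, \<open>H (q^m - 1) q + 1 = H (q^(m+1) - 1)\<close>.\<close>

lemma delta_le_geometric:
  assumes "g \<le> H + 1" "1 \<le> g" "1 \<le> k"
  shows "delta H r P Q k g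
    \<le> real H * (((real H + 1) / real H) ^ (H + 1 - g) - 1) * ((\<Sum>t=1..k. R t) / real k)"
  using assms
proof (induction g arbitrary: k rule: inc_induct)
  case base
  show ?case using Q_last Qstar_last[of H r P] by (auto intro!: delta_le)
next
  case (step g)
  define S where "S k = (\<Sum>t=1..k. R t)" for k
  define q where "q = (real H + 1) / real H"
  define c where "c = real H * (q ^ (H + 1 - Suc g) - 1)"
  have Hpos: "0 < real H" using H by simp
  have c0: "0 \<le> c"
    unfolding c_def using one_le_power[of q] Hpos by (simp add: q_def)
  have S0: "0 \<le> S k" for k unfolding S_def using R0 by (auto intro!: sum_nonneg)
  have S_mono: "S k \<le> S (Suc k)" for k unfolding S_def using R0 by simp
  have "delta H r P Q k g \<le> (\<Sum>t=1..k. wt alpha k t * delta H r P Q t (g + 1)) + reg H alpha Q mu nu k (g + 1)"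
    using delta_step step by simp
  also have "\<dots> \<le> (\<Sum>t=1..k. wt alpha k t * (c * (S t / real t))) + R k"
    using step wt_nonneg[OF alpha_range] reg_le[of k "g + 1"]
    by (intro add_mono sum_mono mult_left_mono) (auto simp: c_def q_def S_def)
  also have "\<dots> = c * (\<Sum>t=1..k. wt alpha k t * (S t / real t)) + R k"
    by (simp add: sum_distrib_left mult_ac)
  also have "\<dots> \<le> c * (q * S k / real k) + S k / real k"
    using antitone_le_average[of R, OF R_mono step.prems(2)] c0
      weighted_average_le[where alpha=alpha and S=S, OF H alpha_eq S0 S_mono step.prems(2)]
    by (intro add_mono mult_left_mono) (simp_all add: S_def q_def)
  also have "\<dots> = (c * q + 1) * (S k / real k)"
    by (simp add: algebra_simps add_divide_distrib)
  also have "c * q + 1 = real H * (q ^ (H + 1 - g) - 1)"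
  proof -
    have "H + 1 - g = Suc (H + 1 - Suc g)" using step by simp
    then show ?thesis unfolding c_def q_def using Hpos by (simp add: field_simps)
  qed
  finally show ?case by (simp add: S_def q_def)
qed

lemma delta_le_regret_average:
  assumes "1 \<le> k" "1 \<le> h" "h \<le> H + 1"
  shows "delta H r P Q k h \<le> 2 * real H / real k * (\<Sum>t=1..k. R t)"
proof -
  have "((real H + 1) / real H) ^ (H + 1 - h) \<le> 3"
    using assms by (intro ratio_power_le_three[OF H]) simp
  moreover have "0 \<le> (\<Sum>t=1..k. R t) / real k" using R0 by (intro divide_nonneg_nonneg sum_nonneg) auto
  ultimately have "real H * (((real H + 1) / real H) ^ (H + 1 - h) - 1) * ((\<Sum>t=1..k. R t) / real k)
      \<le> (2 * real H) * ((\<Sum>t=1..k. R t) / real k)"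
    using H by (intro mult_right_mono) (auto simp: mult_left_mono)
  with delta_le_geometric[OF assms(3,2,1)] show ?thesis by simp
qed

end

end

theorem mainTheorem1:
  fixes H :: nat
    and r :: "nat \<Rightarrow> 's::finite \<Rightarrow> 'a::finite \<Rightarrow> 'b::finite \<Rightarrow> real"
    and P :: "nat \<Rightarrow> 's \<Rightarrow> 'a \<Rightarrow> 'b \<Rightarrow> 's \<Rightarrow> real"
    and alpha :: "nat \<Rightarrow> real"
    and mu :: "nat \<Rightarrow> nat \<Rightarrow> 's \<Rightarrow> 'a \<Rightarrow> real"
    and nu :: "nat \<Rightarrow> nat \<Rightarrow> 's \<Rightarrow> 'b \<Rightarrow> real"
    and Q :: "nat \<Rightarrow> nat \<Rightarrow> 's \<Rightarrow> 'a \<Rightarrow> 'b \<Rightarrow> real"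
  assumes H: "1 \<le> H"
    and r_range: "\<And>h s a b. 1 \<le> h \<Longrightarrow> h \<le> H \<Longrightarrow> 0 \<le> r h s a b \<and> r h s a b \<le> 1"
    and P_dist: "\<And>h s a b. 1 \<le> h \<Longrightarrow> h \<le> H \<Longrightarrow> P h s a b \<in> simplex"
    and alpha_range: "\<And>k. 1 \<le> k \<Longrightarrow> 0 < alpha k \<and> alpha k \<le> 1"
    and alpha1: "alpha 1 = 1"
    and mu_pol: "\<And>k h s. 1 \<le> k \<Longrightarrow> 1 \<le> h \<Longrightarrow> h \<le> H \<Longrightarrow> mu k h s \<in> simplex"
    and nu_pol: "\<And>k h s. 1 \<le> k \<Longrightarrow> 1 \<le> h \<Longrightarrow> h \<le> H \<Longrightarrow> nu k h s \<in> simplex"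
    and Q_last: "\<And>k s a b. Q k (H + 1) s a b = 0"
    and Q_init: "\<And>h s a b. 1 \<le> h \<Longrightarrow> h \<le> H \<Longrightarrow> Q 0 h s a b = real (H - h + 1)"
    and Q_step: "\<And>k h s a b. 1 \<le> k \<Longrightarrow> 1 \<le> h \<Longrightarrow> h \<le> H \<Longrightarrow>
        Q k h s a b = (1 - alpha k) * Q (k - 1) h s a b
          + alpha k * (r h s a b
              + (\<Sum>s'\<in>UNIV. P h s a b s' * ip (Q k (h + 1) s') (mu k (h + 1) s') (nu k (h + 1) s')))"
  shows "(\<forall>k h. 1 \<le> k \<longrightarrow> 1 \<le> h \<longrightarrow> h \<le> H \<longrightarrow>
            delta H r P Q k h \<le> (\<Sum>t=1..k. wt alpha k t * delta H r P Q t (h + 1))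
                                 + reg H alpha Q mu nu k (h + 1))
       \<and> ((\<forall>k. 1 \<le> k \<longrightarrow> alpha k = (real H + 1) / (real H + real k)) \<longrightarrow>
          (\<forall>R :: nat \<Rightarrow> real.
             (\<forall>k. 1 \<le> k \<longrightarrow> 0 \<le> R k)
             \<longrightarrow> (\<forall>k. 1 \<le> k \<longrightarrow> R (k + 1) \<le> R k)
             \<longrightarrow> (\<forall>k h. 1 \<le> k \<longrightarrow> 1 \<le> h \<longrightarrow> h \<le> H + 1 \<longrightarrow> reg H alpha Q mu nu k h \<le> R k)
             \<longrightarrow> (\<forall>k h. 1 \<le> k \<longrightarrow> 1 \<le> h \<longrightarrow> h \<le> H + 1 \<longrightarrow>
                   delta H r P Q k h \<le> 2 * real H / real k * (\<Sum>t=1..k. R t))))"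
proof -
  interpret zero_sum_q_learning H r P alpha mu nu Q
    using P_dist alpha_range alpha1 mu_pol nu_pol Q_last Q_step by unfold_locales
  show ?thesis
    using delta_step delta_le_regret_average[OF H] by blast
qed

end
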